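(* Let $p=2$ and assume $\mu^1,\dots,\mu^N$ are not all equal. Let $\tilde\nu=\sum_{i=1}^N\lambda_i\sum_{k=1}^{n_i}\mu^i_k\delta(m^i_k)$ be the output of the pairwise algorithm, where $$m^i_k=\sum_{j=1}^N\lambda_j\sum_{l=1}^{n_j}\frac{\pi^{ij}_{k,l}}{\mu^i_k}x^j_l.$$ Then for any optimal barycenter $\hat\nu$ (minimizer of $\Psi_2$), $$\frac{\Psi_2(\tilde\nu)}{\Psi_2(\hat\nu)}\le2-\frac{\sum_{i=1}^N\lambda_i\sum_{k=1}^{n_i}\mu^i_k\|m^i_k-x^i_k\|^2}{\sum_{1\le i<j\le N}\lambda_i\lambda_j\mathcal{W}_2^2(\mu^i,\mu^j)}.$$
   Context: $\|\cdot\|$ is the Euclidean norm on $\mathbb{R}^d$. For finitely supported probability measures $\mu,\nu$ on $\mathbb{R}^d$, $\mathcal{W}_2^2(\mu,\nu)\coloneqq\min_{\pi\in\Pi(\mu,\nu)}\int\|x-y\|^2\,d\pi$, with $\Pi(\mu,\nu)$ the set of couplings. Fix $N\ge2$, $\lambda\in\Delta_N\coloneqq\{\lambda\in(0,1)^N:\sum_i\lambda_i=1\}$, and discrete probability measures $\mu^i=\sum_{l=1}^{n_i}\mu^i_l\delta(x^i_l)$, $i=1,\dots,N$, with positive weights and pairwise distinct points for each $i$. $\Psi_2(\nu)\coloneqq\sum_{i=1}^N\lambda_i\mathcal{W}_2^2(\nu,\mu^i)$. Plans of the pairwise algorithm: $\pi^{ii}\coloneqq\sum_k\mu^i_k\delta(x^i_k,x^i_k)$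 (so $\pi^{ii}_{k,l}=\mu^i_k$ if $l=k$, else $0$); for $i<j$, $\pi^{ij}=\sum_{k,l}\pi^{ij}_{k,l}\delta(x^i_k,x^j_l)\in\Pi(\mu^i,\mu^j)$ is an optimal plan for the cost $\|x-y\|^2$; and $\pi^{ji}_{l,k}\coloneqq\pi^{ij}_{k,l}$. *)

theory Defs
  imports "HOL-Analysis.Analysis"
begin

text \<open>Finitely supported (discrete) measures on a Euclidean space are represented
  by their mass functions 'a \<Rightarrow> real; support = points of nonzero mass.\<close>

definition supp_m :: "('b \<Rightarrow> real) \<Rightarrow> 'b set" where
  "supp_m f = {y. f y \<noteq> 0}"

definition fsprob :: "('a \<Rightarrow> real) \<Rightarrow> bool" where
  "fsprob \<nu> \<longleftrightarrow> finite (supp_m \<nu>) \<and> (\<forall>y. \<nu> y \<ge> 0) \<and> sum \<nu> (supp_m \<nu>) = 1"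

definition coupling :: "('a \<Rightarrow> real) \<Rightarrow> ('a \<Rightarrow> real) \<Rightarrow> ('a \<times> 'a \<Rightarrow> real) \<Rightarrow> bool" where
  "coupling \<mu> \<nu> \<pi> \<longleftrightarrow> (\<forall>p. \<pi> p \<ge> 0) \<and> finite (supp_m \<pi>)
     \<and> (\<forall>x y. \<pi> (x, y) \<noteq> 0 \<longrightarrow> \<mu> x \<noteq> 0 \<and> \<nu> y \<noteq> 0)
     \<and> (\<forall>x. (\<Sum>y\<in>supp_m \<nu>. \<pi> (x, y)) = \<mu> x)
     \<and> (\<forall>y. (\<Sum>x\<in>supp_m \<mu>. \<pi> (x, y)) = \<nu> y)"

definition transport_cost :: "('a::real_normed_vector \<times> 'a \<Rightarrow> real) \<Rightarrow> real" where
  "transport_cost \<pi> = (\<Sum>p\<in>supp_m \<pi>. \<pi> p * (norm (fst p - snd p))\<^sup>2)"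

definition W2sq :: "('a::real_normed_vector \<Rightarrow> real) \<Rightarrow> ('a \<Rightarrow> real) \<Rightarrow> real" where
  "W2sq \<mu> \<nu> = Inf {transport_cost \<pi> | \<pi>. coupling \<mu> \<nu> \<pi>}"

definition dmeas :: "nat \<Rightarrow> (nat \<Rightarrow> real) \<Rightarrow> (nat \<Rightarrow> 'a) \<Rightarrow> ('a \<Rightarrow> real)" where
  "dmeas n w x = (\<lambda>y. \<Sum>l<n. if x l = y then w l else 0)"

definition Psi2 :: "nat \<Rightarrow> (nat \<Rightarrow> real) \<Rightarrow> (nat \<Rightarrow> nat) \<Rightarrow> (nat \<Rightarrow> nat \<Rightarrow> real)
    \<Rightarrow> (nat \<Rightarrow> nat \<Rightarrow> 'a::real_normed_vector) \<Rightarrow> ('a \<Rightarrow> real) \<Rightarrow> real" where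
  "Psi2 N lam n w x \<nu> = (\<Sum>i<N. lam i * W2sq \<nu> (dmeas (n i) (w i) (x i)))"

end

theory Submission
  imports Defs
begin

(*
  Let S be the \<lambda>-weighted sum of the squared distances W\<^sub>2\<^sup>2(\<mu>\<^sup>i, \<mu>\<^sup>j) over i < j and D the
  subtracted sum; the claim follows from \<Psi>\<^sub>2(\<nu>t) \<le> 2S - D and S \<le> \<Psi>\<^sub>2(\<nu>h).

  Upper bound: for each j, moving mass \<lambda>\<^sub>i \<pi>\<^sup>i\<^sup>j(k, l) from m\<^sup>i\<^sub>k to x\<^sup>j\<^sub>l couples \<nu>t with \<mu>\<^sup>j.
  As m\<^sup>i\<^sub>k is the barycentre of the points x\<^sup>j\<^sub>l with weights \<lambda>\<^sub>j \<pi>\<^sup>i\<^sup>j(k, l), the parallel-axis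
  identity turns the total cost of these couplings into the \<lambda>\<^sub>i \<lambda>\<^sub>j-weighted sum of the costs of
  all plans \<pi>\<^sup>i\<^sup>j minus D, that is 2S - D.

  Lower bound, valid for every probability measure \<nu>: gluing couplings of \<nu> with \<mu>\<^sup>i and with \<mu>\<^sup>j
  along \<nu> couples \<mu>\<^sup>i with \<mu>\<^sup>j. For fixed y the conditional laws X\<^sub>i of the glued couplings
  satisfy \<Sum>\<^sub>i\<^sub>,\<^sub>j \<lambda>\<^sub>i \<lambda>\<^sub>j E|X\<^sub>i - X\<^sub>j|\<^sup>2 \<le> 2 \<Sum>\<^sub>i \<lambda>\<^sub>i E|y - X\<^sub>i|\<^sup>2, and integrating in y gives S \<le> \<Psi>\<^sub>2(\<nu>)
  up to an arbitrary \<epsilon>, since W2sq is only an infimum.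
*)

section \<open>Pushforwards and couplings\<close>

definition pushforward :: "'i set \<Rightarrow> ('i \<Rightarrow> real) \<Rightarrow> ('i \<Rightarrow> 'b) \<Rightarrow> 'b \<Rightarrow> real" where
  "pushforward I c f = (\<lambda>y. \<Sum>t\<in>I. if f t = y then c t else 0)"

lemma dmeas_eq_pushforward: "dmeas n w x = pushforward {..<n} w x"
  by (simp add: dmeas_def pushforward_def)

lemma supp_pushforward_subset: "supp_m (pushforward I c f) \<subseteq> f ` I"
proof
  fix y assume "y \<in> supp_m (pushforward I c f)"
  then have "(\<Sum>t\<in>I. if f t = y then c t else 0) \<noteq> 0"
    by (simp add: supp_m_def pushforward_def)
  then show "y \<in> f ` I"
    by (rule contrapos_np) (auto intro!: sum.neutral)
qed

lemma finite_supp_pushforward: "finite I \<Longrightarrow> finite (supp_m (pushforward I c f))"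
  by (rule finite_subset[OF supp_pushforward_subset finite_imageI])

lemma pushforward_nonneg: "(\<And>t. t \<in> I \<Longrightarrow> 0 \<le> c t) \<Longrightarrow> 0 \<le> pushforward I c f y"
  unfolding pushforward_def by (auto intro: sum_nonneg)

lemma mem_supp_pushforward:
  assumes "finite I" "\<And>t. t \<in> I \<Longrightarrow> 0 \<le> c t" "t \<in> I" "c t \<noteq> 0"
  shows "f t \<in> supp_m (pushforward I c f)"
proof -
  have "c t \<le> pushforward I c f (f t)"
    unfolding pushforward_def using member_le_sum[OF assms(3), of "\<lambda>s. if f s = f t then c s else 0"] assms
    by simp
  moreover have "0 < c t" using assms(2-4) by force
  ultimately show ?thesis by (simp add: supp_m_def)
qed

lemma sum_pushforward:
  assumes "finite I" "finite S" "\<And>t. t \<in> I \<Longrightarrow> c t \<noteq> 0 \<Longrightarrow> f t \<in> S"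
  shows "(\<Sum>y\<in>S. pushforward I c f y * \<phi> y) = (\<Sum>t\<in>I. c t * \<phi> (f t))"
proof -
  have "(\<Sum>y\<in>S. pushforward I c f y * \<phi> y) = (\<Sum>t\<in>I. \<Sum>y\<in>S. if f t = y then c t * \<phi> y else 0)"
    unfolding pushforward_def sum_distrib_right by (rule sum.swap[THEN trans], intro sum.cong refl) simp
  also have "\<dots> = (\<Sum>t\<in>I. c t * \<phi> (f t))"
    using assms(2,3) by (intro sum.cong refl) (auto simp: sum.delta)
  finally show ?thesis .
qed

lemma pushforward_fst:
  "pushforward (A \<times> B) c (\<lambda>p. f (fst p)) = pushforward A (\<lambda>a. \<Sum>b\<in>B. c (a, b)) f"
  unfolding pushforward_def fun_eq_iff sum.cartesian_product'
  by (intro allI sum.cong refl) auto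

lemma pushforward_snd:
  "pushforward (A \<times> B) c (\<lambda>p. g (snd p)) = pushforward B (\<lambda>b. \<Sum>a\<in>A. c (a, b)) g"
  unfolding pushforward_def fun_eq_iff sum.cartesian_product'
  by (subst sum.swap) (intro allI sum.cong refl; auto)

lemma pushforward_supp: "finite (supp_m \<nu>) \<Longrightarrow> pushforward (supp_m \<nu>) \<nu> (\<lambda>y. y) = \<nu>"
  by (auto simp: fun_eq_iff pushforward_def sum.delta supp_m_def)

lemma pushforward_cong: "(\<And>t. t \<in> I \<Longrightarrow> c t = c' t) \<Longrightarrow> pushforward I c f = pushforward I c' f"
  unfolding pushforward_def fun_eq_iff by (intro allI sum.cong refl) auto

lemma sum_pushforward_pair:
  assumes "finite I" "\<And>t. t \<in> I \<Longrightarrow> 0 \<le> c t"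
  shows "(\<Sum>b\<in>supp_m (pushforward I c g). pushforward I c (\<lambda>t. (f t, g t)) (a, b)) = pushforward I c f a"
proof -
  define c' where "c' t = (if f t = a then c t else 0)" for t
  have "pushforward I c (\<lambda>t. (f t, g t)) (a, b) = pushforward I c' g b * 1" for b
    unfolding pushforward_def c'_def by (auto intro!: sum.cong)
  then have "(\<Sum>b\<in>supp_m (pushforward I c g). pushforward I c (\<lambda>t. (f t, g t)) (a, b))
      = (\<Sum>b\<in>supp_m (pushforward I c g). pushforward I c' g b * 1)"
    by simp
  also have "\<dots> = (\<Sum>t\<in>I. c' t * 1)"
    using assms by (intro sum_pushforward finite_supp_pushforward mem_supp_pushforward) (auto simp: c'_def split: if_splits)
  also have "\<dots> = pushforward I c f a"
    by (simp add: pushforward_def c'_def eq_commute)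
  finally show ?thesis .
qed

lemma coupling_pushforward:
  assumes "finite I" "\<And>t. t \<in> I \<Longrightarrow> 0 \<le> c t"
  shows "coupling (pushforward I c f) (pushforward I c g) (pushforward I c (\<lambda>t. (f t, g t)))"
  unfolding coupling_def
proof (intro conjI allI impI)
  show nonneg: "0 \<le> pushforward I c (\<lambda>t. (f t, g t)) p" for p
    using assms(2) by (rule pushforward_nonneg)
  show "finite (supp_m (pushforward I c (\<lambda>t. (f t, g t))))"
    using assms(1) by (rule finite_supp_pushforward)
  show "(\<Sum>b\<in>supp_m (pushforward I c g). pushforward I c (\<lambda>t. (f t, g t)) (a, b)) = pushforward I c f a" for a
    using sum_pushforward_pair[of I c, OF assms] .
  have "pushforward I c (\<lambda>t. (f t, g t)) (a, b) = pushforward I c (\<lambda>t. (g t, f t)) (b, a)" for a b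
    unfolding pushforward_def by (auto intro!: sum.cong)
  then show "(\<Sum>a\<in>supp_m (pushforward I c f). pushforward I c (\<lambda>t. (f t, g t)) (a, b)) = pushforward I c g b" for b
    using sum_pushforward_pair[of I c, OF assms, where f=g and g=f] by simp
  fix a b
  have "pushforward I c (\<lambda>t. (f t, g t)) (a, b) \<le> pushforward I c f a"
       "pushforward I c (\<lambda>t. (f t, g t)) (a, b) \<le> pushforward I c g b"
    unfolding pushforward_def using assms(2) by (auto intro!: sum_mono)
  moreover assume "pushforward I c (\<lambda>t. (f t, g t)) (a, b) \<noteq> 0"
  ultimately show "pushforward I c f a \<noteq> 0" "pushforward I c g b \<noteq> 0"
    using nonneg[of "(a, b)"] by linarith+
qed

lemma transport_cost_pushforward:
  assumes "finite I" "\<And>t. t \<in> I \<Longrightarrow> 0 \<le> c t"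
  shows "transport_cost (pushforward I c (\<lambda>t. (f t, g t))) = (\<Sum>t\<in>I. c t * (norm (f t - g t))\<^sup>2)"
  unfolding transport_cost_def using assms
  by (subst sum_pushforward) (auto intro: finite_supp_pushforward mem_supp_pushforward)

lemma transport_cost_nonneg: "coupling \<mu> \<nu> \<pi> \<Longrightarrow> 0 \<le> transport_cost \<pi>"
  unfolding coupling_def transport_cost_def by (auto intro!: sum_nonneg)

lemma W2sq_le: "coupling \<mu> \<nu> \<pi> \<Longrightarrow> W2sq \<mu> \<nu> \<le> transport_cost \<pi>"
  unfolding W2sq_def by (rule cInf_lower) (auto simp: bdd_below_def intro: transport_cost_nonneg)

lemma W2sq_nonneg: "coupling \<mu> \<nu> \<pi> \<Longrightarrow> 0 \<le> W2sq \<mu> \<nu>"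
  unfolding W2sq_def by (rule cInf_greatest) (auto intro: transport_cost_nonneg)

lemma W2sq_pushforward_le:
  assumes "finite I" "\<And>t. t \<in> I \<Longrightarrow> 0 \<le> c t"
  shows "W2sq (pushforward I c f) (pushforward I c g) \<le> (\<Sum>t\<in>I. c t * (norm (f t - g t))\<^sup>2)"
    and "0 \<le> W2sq (pushforward I c f) (pushforward I c g)"
proof -
  have "coupling (pushforward I c f) (pushforward I c g) (pushforward I c (\<lambda>t. (f t, g t)))"
    by (rule coupling_pushforward) (use assms in auto)
  moreover have "transport_cost (pushforward I c (\<lambda>t. (f t, g t))) = (\<Sum>t\<in>I. c t * (norm (f t - g t))\<^sup>2)"
    by (rule transport_cost_pushforward) (use assms in auto)
  ultimately show "W2sq (pushforward I c f) (pushforward I c g) \<le> (\<Sum>t\<in>I. c t * (norm (f t - g t))\<^sup>2)"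
    and "0 \<le> W2sq (pushforward I c f) (pushforward I c g)"
    using W2sq_le W2sq_nonneg by metis+
qed

lemma W2sq_approx:
  assumes "coupling \<mu> \<nu> \<pi>" "0 < e"
  obtains \<pi>' where "coupling \<mu> \<nu> \<pi>'" "transport_cost \<pi>' < W2sq \<mu> \<nu> + e"
proof -
  have "{transport_cost \<pi> | \<pi>. coupling \<mu> \<nu> \<pi>} \<noteq> {}" using assms(1) by blast
  from cInf_lessD[OF this, of "W2sq \<mu> \<nu> + e"] show ?thesis
    using assms that unfolding W2sq_def by auto
qed

lemma coupling_product_pushforward:
  assumes "finite A" "finite B" "\<And>a. a \<in> A \<Longrightarrow> 0 \<le> p a" "\<And>b. b \<in> B \<Longrightarrow> 0 \<le> q b"
    and "sum p A = 1" "sum q B = 1"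
  shows "\<exists>\<pi>. coupling (pushforward A p f) (pushforward B q g) \<pi>"
proof -
  define c where "c t = p (fst t) * q (snd t)" for t
  have "coupling (pushforward (A \<times> B) c (\<lambda>t. f (fst t))) (pushforward (A \<times> B) c (\<lambda>t. g (snd t)))
      (pushforward (A \<times> B) c (\<lambda>t. (f (fst t), g (snd t))))"
    using assms(1-4) by (intro coupling_pushforward) (auto simp: c_def)
  moreover have "pushforward (A \<times> B) c (\<lambda>t. f (fst t)) = pushforward A p f"
    unfolding pushforward_fst c_def using assms(6) by (simp add: sum_distrib_left[symmetric])
  moreover have "pushforward (A \<times> B) c (\<lambda>t. g (snd t)) = pushforward B q g"
    unfolding pushforward_snd c_def using assms(5) by (simp add: sum_distrib_right[symmetric])
  ultimately show ?thesis by auto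
qed

section \<open>Dispersion in inner product spaces\<close>

lemma sum_sq_dist_barycenter:
  fixes r :: "'i \<Rightarrow> real" and y :: "'i \<Rightarrow> 'a::real_inner"
  assumes "sum r T = W" "(\<Sum>t\<in>T. r t *\<^sub>R y t) = W *\<^sub>R m"
  shows "(\<Sum>t\<in>T. r t * (norm (z - y t))\<^sup>2) = (\<Sum>t\<in>T. r t * (norm (m - y t))\<^sup>2) + W * (norm (m - z))\<^sup>2"
proof -
  have expand: "(norm (z - y t))\<^sup>2 = (norm (m - y t))\<^sup>2 + 2 * ((m - y t) \<bullet> (z - m)) + (norm (m - z))\<^sup>2" for t
    by (simp add: power2_norm_eq_inner inner_diff_left inner_diff_right inner_commute algebra_simps)
  have cross: "(\<Sum>t\<in>T. r t * ((m - y t) \<bullet> (z - m))) = 0"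
  proof -
    have "(\<Sum>t\<in>T. r t * ((m - y t) \<bullet> (z - m))) = (\<Sum>t\<in>T. r t *\<^sub>R (m - y t)) \<bullet> (z - m)"
      by (simp add: inner_sum_left)
    also have "(\<Sum>t\<in>T. r t *\<^sub>R (m - y t)) = 0"
      using assms by (simp add: scaleR_right_diff_distrib sum_subtractf flip: scaleR_left.sum)
    finally show ?thesis by simp
  qed
  have "(\<Sum>t\<in>T. r t * (norm (z - y t))\<^sup>2)
      = (\<Sum>t\<in>T. r t * (norm (m - y t))\<^sup>2 + 2 * (r t * ((m - y t) \<bullet> (z - m))) + r t * (norm (m - z))\<^sup>2)"
    by (rule sum.cong) (simp_all add: expand algebra_simps)
  also have "\<dots> = (\<Sum>t\<in>T. r t * (norm (m - y t))\<^sup>2) + 2 * (\<Sum>t\<in>T. r t * ((m - y t) \<bullet> (z - m)))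
      + sum r T * (norm (m - z))\<^sup>2"
    by (simp only: sum.distrib sum_distrib_left sum_distrib_right)
  finally show ?thesis using cross assms(1) by simp
qed

lemma sum_pairwise_sq_dist_le:
  fixes r :: "'i \<Rightarrow> real" and y :: "'i \<Rightarrow> 'a::real_inner"
  shows "(\<Sum>s\<in>T. \<Sum>t\<in>T. r s * r t * (norm (y s - y t))\<^sup>2) \<le> 2 * sum r T * (\<Sum>t\<in>T. r t * (norm (z - y t))\<^sup>2)"
proof -
  define v where "v = (\<Sum>t\<in>T. r t *\<^sub>R (z - y t))"
  have expand: "(norm (y s - y t))\<^sup>2 = (norm (z - y s))\<^sup>2 + (norm (z - y t))\<^sup>2 - 2 * ((z - y s) \<bullet> (z - y t))" for s t
    by (simp add: power2_norm_eq_inner inner_diff_left inner_diff_right inner_commute algebra_simps)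
  have "(\<Sum>s\<in>T. \<Sum>t\<in>T. r s * r t * ((z - y s) \<bullet> (z - y t))) = v \<bullet> v"
    unfolding v_def inner_sum_left inner_sum_right by (intro sum.cong refl) (simp add: inner_commute)
  moreover have "(\<Sum>s\<in>T. \<Sum>t\<in>T. r s * r t * (norm (y s - y t))\<^sup>2)
      = (\<Sum>s\<in>T. \<Sum>t\<in>T. r t * (r s * (norm (z - y s))\<^sup>2) + r s * (r t * (norm (z - y t))\<^sup>2)
          - 2 * (r s * r t * ((z - y s) \<bullet> (z - y t))))"
    unfolding expand by (intro sum.cong refl) (simp add: algebra_simps)
  moreover have "\<dots> = 2 * sum r T * (\<Sum>t\<in>T. r t * (norm (z - y t))\<^sup>2)
      - 2 * (\<Sum>s\<in>T. \<Sum>t\<in>T. r s * r t * ((z - y s) \<bullet> (z - y t)))"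
    by (simp only: sum_subtractf sum.distrib flip: sum_distrib_left sum_distrib_right)
  ultimately show ?thesis by simp
qed

lemma sum_upper_triangle:
  fixes T :: "nat \<Rightarrow> nat \<Rightarrow> 'a::comm_monoid_add"
  assumes "\<And>i j. i < N \<Longrightarrow> j < N \<Longrightarrow> T i j = T j i"
  shows "(\<Sum>i<N. \<Sum>j<N. T i j)
    = (\<Sum>i<N. \<Sum>j<N. if i < j then T i j else 0) + (\<Sum>i<N. \<Sum>j<N. if i < j then T i j else 0) + (\<Sum>i<N. T i i)"
proof -
  have lower: "(\<Sum>i<N. \<Sum>j<N. if j < i then T i j else 0) = (\<Sum>i<N. \<Sum>j<N. if i < j then T i j else 0)"
    by (subst sum.swap) (use assms in \<open>auto intro!: sum.cong\<close>)
  have "(\<Sum>i<N. \<Sum>j<N. T i j) = (\<Sum>i<N. \<Sum>j<N. (if i < j then T i j else 0) + (if j < i then T i j else 0)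
      + (if i = j then T i j else 0))"
    by (intro sum.cong refl) auto
  then show ?thesis by (simp add: sum.distrib lower)
qed

lemma sum_pairs_mixture_sq_dist_le:
  fixes A :: "nat \<Rightarrow> 'a::real_inner set" and q :: "nat \<Rightarrow> 'a \<Rightarrow> real"
  assumes "\<And>i. i < N \<Longrightarrow> 0 \<le> lam i" "sum lam {..<N} = 1"
    and "\<And>i. i < N \<Longrightarrow> finite (A i)" "\<And>i a. i < N \<Longrightarrow> a \<in> A i \<Longrightarrow> 0 \<le> q i a"
    and "\<And>i. i < N \<Longrightarrow> sum (q i) (A i) = 1"
  shows "(\<Sum>i<N. \<Sum>j<N. if i < j then lam i * lam j * (\<Sum>a\<in>A i. \<Sum>b\<in>A j. q i a * q j b * (norm (a - b))\<^sup>2) else 0)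
    \<le> (\<Sum>i<N. lam i * (\<Sum>a\<in>A i. q i a * (norm (y - a))\<^sup>2))"
proof -
  define D where "D i j = (\<Sum>a\<in>A i. \<Sum>b\<in>A j. q i a * q j b * (norm (a - b))\<^sup>2)" for i j
  define T where "T = Sigma {..<N} A"
  define r where "r t = lam (fst t) * q (fst t) (snd t)" for t
  have reindex: "(\<Sum>t\<in>T. h t) = (\<Sum>i<N. \<Sum>a\<in>A i. h (i, a))" for h :: "nat \<times> 'a \<Rightarrow> real"
    unfolding T_def using assms(3) by (subst sum.Sigma) auto
  have "(\<Sum>i<N. \<Sum>j<N. lam i * lam j * D i j) = (\<Sum>s\<in>T. \<Sum>t\<in>T. r s * r t * (norm (snd s - snd t))\<^sup>2)"
    unfolding reindex D_def r_def
    by (simp add: sum_distrib_left mult_ac) (intro sum.cong refl sum.swap)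
  also have "\<dots> \<le> 2 * sum r T * (\<Sum>t\<in>T. r t * (norm (y - snd t))\<^sup>2)"
    by (rule sum_pairwise_sq_dist_le)
  also have "sum r T = 1"
    unfolding reindex r_def using assms(2,5) by (simp flip: sum_distrib_left)
  also have "(\<Sum>t\<in>T. r t * (norm (y - snd t))\<^sup>2) = (\<Sum>i<N. lam i * (\<Sum>a\<in>A i. q i a * (norm (y - a))\<^sup>2))"
    unfolding reindex r_def by (simp add: sum_distrib_left mult_ac)
  finally have full: "(\<Sum>i<N. \<Sum>j<N. lam i * lam j * D i j) \<le> 2 * (\<Sum>i<N. lam i * (\<Sum>a\<in>A i. q i a * (norm (y - a))\<^sup>2))"
    by simp
  have "D i j = D j i" for i j
    unfolding D_def by (subst sum.swap) (simp add: norm_minus_commute mult_ac)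
  then have "(\<Sum>i<N. \<Sum>j<N. lam i * lam j * D i j)
      = 2 * (\<Sum>i<N. \<Sum>j<N. if i < j then lam i * lam j * D i j else 0) + (\<Sum>i<N. lam i * lam i * D i i)"
    by (subst sum_upper_triangle) (simp_all add: mult_ac)
  moreover have "0 \<le> (\<Sum>i<N. lam i * lam i * D i i)"
    unfolding D_def using assms(1,4) by (intro sum_nonneg mult_nonneg_nonneg) auto
  ultimately show ?thesis using full unfolding D_def by linarith
qed

section \<open>Pairwise distances are bounded by Psi2\<close>

lemma transport_cost_eq_double_sum:
  assumes "coupling \<mu> \<nu> \<pi>" "finite A" "finite B" "supp_m \<mu> \<subseteq> A" "supp_m \<nu> \<subseteq> B"
  shows "transport_cost \<pi> = (\<Sum>a\<in>A. \<Sum>b\<in>B. \<pi> (a, b) * (norm (a - b))\<^sup>2)"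
proof -
  have "supp_m \<pi> \<subseteq> A \<times> B" using assms unfolding coupling_def supp_m_def by auto
  then have "transport_cost \<pi> = (\<Sum>p\<in>A \<times> B. \<pi> p * (norm (fst p - snd p))\<^sup>2)"
    unfolding transport_cost_def using assms(2,3)
    by (intro sum.mono_neutral_left) (auto simp: supp_m_def)
  then show ?thesis by (simp add: sum.cartesian_product')
qed

lemma W2sq_le_gluing:
  assumes "\<And>y. 0 \<le> \<nu> y" "finite (supp_m \<nu>)" "finite (supp_m \<mu>\<^sub>1)" "finite (supp_m \<mu>\<^sub>2)"
    and "coupling \<nu> \<mu>\<^sub>1 \<gamma>\<^sub>1" "coupling \<nu> \<mu>\<^sub>2 \<gamma>\<^sub>2"
  shows "W2sq \<mu>\<^sub>1 \<mu>\<^sub>2 \<le> (\<Sum>y\<in>supp_m \<nu>. \<nu> y * (\<Sum>a\<in>supp_m \<mu>\<^sub>1. \<Sum>b\<in>supp_m \<mu>\<^sub>2.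
      \<gamma>\<^sub>1 (y, a) / \<nu> y * (\<gamma>\<^sub>2 (y, b) / \<nu> y) * (norm (a - b))\<^sup>2))"
proof -
  define Y A B where "Y = supp_m \<nu>" and "A = supp_m \<mu>\<^sub>1" and "B = supp_m \<mu>\<^sub>2"
  define c where "c t = \<gamma>\<^sub>1 (fst t, fst (snd t)) * \<gamma>\<^sub>2 (fst t, snd (snd t)) / \<nu> (fst t)" for t
  have \<nu>_pos: "0 < \<nu> y" if "y \<in> Y" for y
    using assms(1)[of y] that unfolding Y_def supp_m_def by auto
  then have \<nu>_ne: "\<nu> y \<noteq> 0" if "y \<in> Y" for y
    using that by fastforce
  have c_nonneg: "0 \<le> c t" if "t \<in> Y \<times> A \<times> B" for t
    using assms(5,6) \<nu>_pos that unfolding c_def coupling_def by (auto intro!: divide_nonneg_pos)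
  have \<mu>\<^sub>1_eq: "\<mu>\<^sub>1 = pushforward (Y \<times> A \<times> B) c (\<lambda>t. fst (snd t))"
  proof -
    have "(\<Sum>b\<in>B. \<Sum>y\<in>Y. c (y, a, b)) = \<mu>\<^sub>1 a" for a
    proof -
      have "(\<Sum>b\<in>B. \<Sum>y\<in>Y. c (y, a, b)) = (\<Sum>y\<in>Y. \<gamma>\<^sub>1 (y, a) * (\<Sum>b\<in>B. \<gamma>\<^sub>2 (y, b)) / \<nu> y)"
        unfolding c_def by (subst sum.swap) (simp add: sum_distrib_left sum_divide_distrib)
      also have "\<dots> = (\<Sum>y\<in>Y. \<gamma>\<^sub>1 (y, a))"
        using assms(6) \<nu>_ne unfolding coupling_def B_def by (intro sum.cong refl) simp
      finally show ?thesis using assms(5) unfolding coupling_def Y_def by simp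
    qed
    then show ?thesis
      using pushforward_snd[of Y "A \<times> B" c fst] pushforward_fst[of A B _ "\<lambda>a. a"] pushforward_supp[OF assms(3)]
      unfolding A_def by simp
  qed
  have \<mu>\<^sub>2_eq: "\<mu>\<^sub>2 = pushforward (Y \<times> A \<times> B) c (\<lambda>t. snd (snd t))"
  proof -
    have "(\<Sum>a\<in>A. \<Sum>y\<in>Y. c (y, a, b)) = \<mu>\<^sub>2 b" for b
    proof -
      have "(\<Sum>a\<in>A. \<Sum>y\<in>Y. c (y, a, b)) = (\<Sum>y\<in>Y. \<gamma>\<^sub>2 (y, b) * (\<Sum>a\<in>A. \<gamma>\<^sub>1 (y, a)) / \<nu> y)"
        unfolding c_def by (subst sum.swap) (simp add: sum_distrib_left sum_divide_distrib mult_ac)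
      also have "\<dots> = (\<Sum>y\<in>Y. \<gamma>\<^sub>2 (y, b))"
        using assms(5) \<nu>_ne unfolding coupling_def A_def by (intro sum.cong refl) simp
      finally show ?thesis using assms(6) unfolding coupling_def Y_def by simp
    qed
    then show ?thesis
      using pushforward_snd[of Y "A \<times> B" c snd] pushforward_snd[of A B _ "\<lambda>b. b"] pushforward_supp[OF assms(4)]
      unfolding B_def by simp
  qed
  have "W2sq \<mu>\<^sub>1 \<mu>\<^sub>2 \<le> (\<Sum>t\<in>Y \<times> A \<times> B. c t * (norm (fst (snd t) - snd (snd t)))\<^sup>2)"
    unfolding \<mu>\<^sub>1_eq \<mu>\<^sub>2_eq using assms(2-4) c_nonneg
    by (intro W2sq_pushforward_le(1)) (auto simp: Y_def A_def B_def)
  also have "\<dots> = (\<Sum>y\<in>Y. \<nu> y * (\<Sum>a\<in>A. \<Sum>b\<in>B. \<gamma>\<^sub>1 (y, a) / \<nu> y * (\<gamma>\<^sub>2 (y, b) / \<nu> y) * (norm (a - b))\<^sup>2))"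
    unfolding sum.cartesian_product' sum_distrib_left c_def
    by (intro sum.cong refl) (simp add: \<nu>_ne field_simps power2_eq_square)
  finally show ?thesis unfolding Y_def A_def B_def .
qed

lemma sum_pairs_W2sq_le_transport_costs:
  fixes \<nu> :: "'a::real_inner \<Rightarrow> real" and \<mu> :: "nat \<Rightarrow> 'a \<Rightarrow> real"
  assumes "\<And>i. i < N \<Longrightarrow> 0 \<le> lam i" "sum lam {..<N} = 1"
    and "\<And>y. 0 \<le> \<nu> y" "finite (supp_m \<nu>)" "\<And>i. i < N \<Longrightarrow> finite (supp_m (\<mu> i))"
    and "\<And>i. i < N \<Longrightarrow> coupling \<nu> (\<mu> i) (\<gamma> i)"
  shows "(\<Sum>i<N. \<Sum>j<N. if i < j then lam i * lam j * W2sq (\<mu> i) (\<mu> j) else 0)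
    \<le> (\<Sum>i<N. lam i * transport_cost (\<gamma> i))"
proof -
  define Y where "Y = supp_m \<nu>"
  define A where "A i = supp_m (\<mu> i)" for i
  define q where "q y i a = \<gamma> i (y, a) / \<nu> y" for y i a
  define D where "D y i j = (\<Sum>a\<in>A i. \<Sum>b\<in>A j. q y i a * q y j b * (norm (a - b))\<^sup>2)" for y i j
  have \<nu>_pos: "0 < \<nu> y" if "y \<in> Y" for y
    using assms(3)[of y] that unfolding Y_def supp_m_def by auto
  have "(\<Sum>i<N. \<Sum>j<N. if i < j then lam i * lam j * W2sq (\<mu> i) (\<mu> j) else 0)
      \<le> (\<Sum>i<N. \<Sum>j<N. if i < j then lam i * lam j * (\<Sum>y\<in>Y. \<nu> y * D y i j) else 0)"
  proof (intro sum_mono)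
    fix i j assume "i \<in> {..<N}" "j \<in> {..<N}"
    then have "W2sq (\<mu> i) (\<mu> j) \<le> (\<Sum>y\<in>Y. \<nu> y * D y i j)"
      unfolding Y_def D_def q_def A_def by (intro W2sq_le_gluing) (use assms in auto)
    then show "(if i < j then lam i * lam j * W2sq (\<mu> i) (\<mu> j) else 0)
        \<le> (if i < j then lam i * lam j * (\<Sum>y\<in>Y. \<nu> y * D y i j) else 0)"
      using assms(1) \<open>i \<in> {..<N}\<close> \<open>j \<in> {..<N}\<close> by (simp add: mult_left_mono)
  qed
  also have "\<dots> = (\<Sum>i<N. \<Sum>j<N. \<Sum>y\<in>Y. \<nu> y * (if i < j then lam i * lam j * D y i j else 0))"
    by (intro sum.cong refl) (simp add: sum_distrib_left mult_ac)
  also have "\<dots> = (\<Sum>y\<in>Y. \<nu> y * (\<Sum>i<N. \<Sum>j<N. if i < j then lam i * lam j * D y i j else 0))"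
    by (simp only: sum.swap[of _ "{..<N}" Y] sum_distrib_left)
  also have "\<dots> \<le> (\<Sum>y\<in>Y. \<nu> y * (\<Sum>i<N. lam i * (\<Sum>a\<in>A i. q y i a * (norm (y - a))\<^sup>2)))"
  proof (rule sum_mono, rule mult_left_mono)
    fix y assume y: "y \<in> Y"
    have "sum (q y i) (A i) = 1" if "i < N" for i
      using assms(6)[OF that] \<nu>_pos[OF y] unfolding q_def A_def Y_def coupling_def
      by (simp flip: sum_divide_distrib)
    then show "(\<Sum>i<N. \<Sum>j<N. if i < j then lam i * lam j * D y i j else 0)
        \<le> (\<Sum>i<N. lam i * (\<Sum>a\<in>A i. q y i a * (norm (y - a))\<^sup>2))"
      unfolding D_def using assms \<nu>_pos[OF y]
      by (intro sum_pairs_mixture_sq_dist_le) (auto simp: A_def q_def coupling_def)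
    show "0 \<le> \<nu> y" by (rule assms(3))
  qed
  also have "\<dots> = (\<Sum>i<N. lam i * (\<Sum>y\<in>Y. \<Sum>a\<in>A i. \<gamma> i (y, a) * (norm (y - a))\<^sup>2))"
    unfolding q_def using \<nu>_pos
    by (simp add: sum_distrib_left sum.swap[of _ Y] mult_ac less_imp_neq[THEN not_sym])
  also have "\<dots> = (\<Sum>i<N. lam i * transport_cost (\<gamma> i))"
    unfolding Y_def A_def using assms(4-6)
    by (intro sum.cong refl arg_cong2[where f="(*)"] transport_cost_eq_double_sum[symmetric]) auto
  finally show ?thesis .
qed

lemma sum_pairs_W2sq_le_Psi2:
  fixes x :: "nat \<Rightarrow> nat \<Rightarrow> 'a::real_inner"
  assumes "\<And>i. i < N \<Longrightarrow> 0 \<le> lam i" "sum lam {..<N} = 1"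
    and "\<And>i k. i < N \<Longrightarrow> k < n i \<Longrightarrow> 0 \<le> w i k" "\<And>i. i < N \<Longrightarrow> sum (w i) {..<n i} = 1"
    and "fsprob \<nu>"
  shows "(\<Sum>i<N. \<Sum>j<N. if i < j then lam i * lam j *
      W2sq (dmeas (n i) (w i) (x i)) (dmeas (n j) (w j) (x j)) else 0) \<le> Psi2 N lam n w x \<nu>"
proof (rule field_le_epsilon)
  fix e :: real assume "0 < e"
  define \<mu> where "\<mu> i = dmeas (n i) (w i) (x i)" for i
  have \<nu>: "\<And>y. 0 \<le> \<nu> y" "finite (supp_m \<nu>)" "sum \<nu> (supp_m \<nu>) = 1"
    using assms(5) unfolding fsprob_def by auto
  have "\<exists>\<pi>. coupling \<nu> (\<mu> i) \<pi>" if "i < N" for i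
    using coupling_product_pushforward[of "supp_m \<nu>" "{..<n i}" \<nu> "w i" "\<lambda>y. y" "x i"] \<nu> assms(3,4) that
    unfolding \<mu>_def dmeas_eq_pushforward pushforward_supp[OF \<nu>(2)] by auto
  then have "\<exists>\<pi>. coupling \<nu> (\<mu> i) \<pi> \<and> transport_cost \<pi> < W2sq \<nu> (\<mu> i) + e" if "i < N" for i
    using that W2sq_approx[OF _ \<open>0 < e\<close>] by metis
  then obtain \<gamma> where \<gamma>: "\<And>i. i < N \<Longrightarrow> coupling \<nu> (\<mu> i) (\<gamma> i)"
    "\<And>i. i < N \<Longrightarrow> transport_cost (\<gamma> i) < W2sq \<nu> (\<mu> i) + e"
    by metis
  have "(\<Sum>i<N. \<Sum>j<N. if i < j then lam i * lam j * W2sq (\<mu> i) (\<mu> j) else 0)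
      \<le> (\<Sum>i<N. lam i * transport_cost (\<gamma> i))"
    using assms(1,2) \<nu>(1,2) \<gamma>(1) unfolding \<mu>_def dmeas_eq_pushforward
    by (intro sum_pairs_W2sq_le_transport_costs) (auto intro: finite_supp_pushforward)
  also have "\<dots> \<le> (\<Sum>i<N. lam i * (W2sq \<nu> (\<mu> i) + e))"
    using assms(1) \<gamma>(2) by (intro sum_mono mult_left_mono) (auto intro: less_imp_le)
  also have "\<dots> = Psi2 N lam n w x \<nu> + e"
    unfolding Psi2_def \<mu>_def using assms(2) by (simp add: distrib_left sum.distrib flip: sum_distrib_right)
  finally show "(\<Sum>i<N. \<Sum>j<N. if i < j then lam i * lam j *
      W2sq (dmeas (n i) (w i) (x i)) (dmeas (n j) (w j) (x j)) else 0) \<le> Psi2 N lam n w x \<nu> + e"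
    unfolding \<mu>_def .
qed

section \<open>The output of the pairwise algorithm\<close>

lemma sum_Sigma_lessThan:
  fixes N :: nat and n :: "nat \<Rightarrow> nat"
  shows "(\<Sum>t\<in>Sigma {..<N} (\<lambda>i. {..<n i}). h t) = (\<Sum>i<N. \<Sum>k<n i. h (i, k))"
  using sum.Sigma[of "{..<N}" "\<lambda>i. {..<n i}" "\<lambda>i k. h (i, k)"] by (simp add: case_prod_beta)

locale pairwise_plans =
  fixes N :: nat and lam :: "nat \<Rightarrow> real" and n :: "nat \<Rightarrow> nat" and w :: "nat \<Rightarrow> nat \<Rightarrow> real"
    and x :: "nat \<Rightarrow> nat \<Rightarrow> 'a::real_inner" and P :: "nat \<Rightarrow> nat \<Rightarrow> nat \<Rightarrow> nat \<Rightarrow> real"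
    and m :: "nat \<Rightarrow> nat \<Rightarrow> 'a"
  assumes lam_nonneg: "\<And>i. i < N \<Longrightarrow> 0 \<le> lam i" and lam_sum: "sum lam {..<N} = 1"
    and w_pos: "\<And>i k. i < N \<Longrightarrow> k < n i \<Longrightarrow> 0 < w i k"
    and P_nonneg: "\<And>i j k l. i < N \<Longrightarrow> j < N \<Longrightarrow> k < n i \<Longrightarrow> l < n j \<Longrightarrow> 0 \<le> P i j k l"
    and P_row_sum: "\<And>i j k. i < N \<Longrightarrow> j < N \<Longrightarrow> k < n i \<Longrightarrow> (\<Sum>l<n j. P i j k l) = w i k"
    and P_col_sum: "\<And>i j l. i < N \<Longrightarrow> j < N \<Longrightarrow> l < n j \<Longrightarrow> (\<Sum>k<n i. P i j k l) = w j l"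
    and m_eq: "\<And>i k. i < N \<Longrightarrow> k < n i \<Longrightarrow>
      m i k = (\<Sum>j<N. lam j *\<^sub>R (\<Sum>l<n j. (P i j k l / w i k) *\<^sub>R x j l))"
begin

lemma W2sq_output_le:
  assumes "j < N"
  defines "\<nu> \<equiv> \<lambda>y. \<Sum>i<N. lam i * (\<Sum>k<n i. if m i k = y then w i k else 0)"
  shows "W2sq \<nu> (dmeas (n j) (w j) (x j))
      \<le> (\<Sum>i<N. \<Sum>k<n i. \<Sum>l<n j. lam i * P i j k l * (norm (m i k - x j l))\<^sup>2)"
    and "0 \<le> W2sq \<nu> (dmeas (n j) (w j) (x j))"
proof -
  define S where "S = Sigma {..<N} (\<lambda>i. {..<n i})"
  define c where "c t = lam (fst (fst t)) * P (fst (fst t)) j (snd (fst t)) (snd t)" for t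
  have c_nonneg: "0 \<le> c t" if "t \<in> S \<times> {..<n j}" for t
    using that assms(1) unfolding S_def c_def by (auto intro!: mult_nonneg_nonneg lam_nonneg P_nonneg)
  have "\<nu> = pushforward S (\<lambda>s. lam (fst s) * w (fst s) (snd s)) (\<lambda>s. m (fst s) (snd s))"
    unfolding \<nu>_def pushforward_def S_def sum_Sigma_lessThan fun_eq_iff
    by (simp add: sum_distrib_left if_distrib[of "\<lambda>a. _ * a"] cong: if_cong)
  also have "\<dots> = pushforward (S \<times> {..<n j}) c (\<lambda>t. m (fst (fst t)) (snd (fst t)))"
    unfolding pushforward_fst[where f="\<lambda>s. m (fst s) (snd s)"] c_def S_def using assms(1)
    by (intro pushforward_cong) (auto simp: P_row_sum simp flip: sum_distrib_left)
  finally have \<nu>_eq: "\<nu> = \<dots>" .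
  have "dmeas (n j) (w j) (x j) = pushforward {..<n j} (\<lambda>l. \<Sum>i<N. lam i * (\<Sum>k<n i. P i j k l)) (x j)"
    unfolding dmeas_eq_pushforward using assms(1)
    by (intro pushforward_cong) (simp add: P_col_sum lam_sum flip: sum_distrib_right)
  also have "\<dots> = pushforward (S \<times> {..<n j}) c (\<lambda>t. x j (snd t))"
    unfolding pushforward_snd S_def c_def sum_Sigma_lessThan by (simp add: sum_distrib_left)
  finally have \<mu>_eq: "dmeas (n j) (w j) (x j) = \<dots>" .
  have cost: "(\<Sum>t\<in>S \<times> {..<n j}. c t * (norm (m (fst (fst t)) (snd (fst t)) - x j (snd t)))\<^sup>2)
      = (\<Sum>i<N. \<Sum>k<n i. \<Sum>l<n j. lam i * P i j k l * (norm (m i k - x j l))\<^sup>2)"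
    unfolding sum.cartesian_product' S_def sum_Sigma_lessThan c_def by simp
  have "finite (S \<times> {..<n j})" unfolding S_def by auto
  from W2sq_pushforward_le[of _ c "\<lambda>t. m (fst (fst t)) (snd (fst t))" "\<lambda>t. x j (snd t)", OF this c_nonneg]
  show
    "W2sq \<nu> (dmeas (n j) (w j) (x j)) \<le> (\<Sum>i<N. \<Sum>k<n i. \<Sum>l<n j. lam i * P i j k l * (norm (m i k - x j l))\<^sup>2)"
    "0 \<le> W2sq \<nu> (dmeas (n j) (w j) (x j))"
    unfolding \<nu>_eq \<mu>_eq cost[symmetric] by simp_all
qed


lemma barycentric_projection_cost:
  assumes "i < N" "k < n i"
  shows "(\<Sum>j<N. \<Sum>l<n j. lam j * P i j k l * (norm (m i k - x j l))\<^sup>2)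
    = (\<Sum>j<N. \<Sum>l<n j. lam j * P i j k l * (norm (x i k - x j l))\<^sup>2) - w i k * (norm (m i k - x i k))\<^sup>2"
proof -
  define T where "T = Sigma {..<N} (\<lambda>j. {..<n j})"
  define r where "r t = lam (fst t) * P i (fst t) k (snd t)" for t
  define y where "y t = x (fst t) (snd t)" for t
  have "sum r T = w i k"
    unfolding T_def r_def sum_Sigma_lessThan using assms
    by (simp add: P_row_sum lam_sum flip: sum_distrib_left sum_distrib_right)
  moreover have "(\<Sum>t\<in>T. r t *\<^sub>R y t) = w i k *\<^sub>R m i k"
    unfolding T_def r_def y_def sum_Sigma_lessThan m_eq[OF assms] using w_pos[OF assms]
    by (simp add: scaleR_sum_right)
  ultimately have "(\<Sum>t\<in>T. r t * (norm (x i k - y t))\<^sup>2)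
      = (\<Sum>t\<in>T. r t * (norm (m i k - y t))\<^sup>2) + w i k * (norm (m i k - x i k))\<^sup>2"
    by (rule sum_sq_dist_barycenter)
  then show ?thesis unfolding T_def r_def y_def sum_Sigma_lessThan by simp
qed

lemma Psi2_output_le:
  defines "\<nu> \<equiv> \<lambda>y. \<Sum>i<N. lam i * (\<Sum>k<n i. if m i k = y then w i k else 0)"
  shows "Psi2 N lam n w x \<nu> \<le> (\<Sum>i<N. \<Sum>j<N. lam i * lam j * (\<Sum>k<n i. \<Sum>l<n j. P i j k l * (norm (x i k - x j l))\<^sup>2))
      - (\<Sum>i<N. lam i * (\<Sum>k<n i. w i k * (norm (m i k - x i k))\<^sup>2))"
    and "0 \<le> Psi2 N lam n w x \<nu>"
proof -
  show "0 \<le> Psi2 N lam n w x \<nu>"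
    unfolding Psi2_def \<nu>_def using lam_nonneg W2sq_output_le(2) by (intro sum_nonneg mult_nonneg_nonneg) auto
  have "Psi2 N lam n w x \<nu> \<le> (\<Sum>j<N. lam j * (\<Sum>i<N. \<Sum>k<n i. \<Sum>l<n j. lam i * P i j k l * (norm (m i k - x j l))\<^sup>2))"
    unfolding Psi2_def \<nu>_def using lam_nonneg W2sq_output_le(1) by (intro sum_mono mult_left_mono) auto
  also have "\<dots> = (\<Sum>i<N. lam i * (\<Sum>k<n i. \<Sum>j<N. \<Sum>l<n j. lam j * P i j k l * (norm (m i k - x j l))\<^sup>2))"
  proof -
    have "(\<Sum>j<N. lam j * (\<Sum>i<N. \<Sum>k<n i. \<Sum>l<n j. lam i * P i j k l * (norm (m i k - x j l))\<^sup>2))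
        = (\<Sum>i<N. \<Sum>j<N. \<Sum>k<n i. \<Sum>l<n j. lam i * (lam j * P i j k l * (norm (m i k - x j l))\<^sup>2))"
      by (subst sum.swap) (simp add: sum_distrib_left mult_ac)
    also have "\<dots> = (\<Sum>i<N. lam i * (\<Sum>k<n i. \<Sum>j<N. \<Sum>l<n j. lam j * P i j k l * (norm (m i k - x j l))\<^sup>2))"
      by (intro sum.cong refl, subst sum.swap) (simp add: sum_distrib_left)
    finally show ?thesis .
  qed
  also have "\<dots> = (\<Sum>i<N. lam i * (\<Sum>k<n i. (\<Sum>j<N. \<Sum>l<n j. lam j * P i j k l * (norm (x i k - x j l))\<^sup>2)
      - w i k * (norm (m i k - x i k))\<^sup>2))"
    by (intro sum.cong refl arg_cong2[where f="(*)"]) (simp add: barycentric_projection_cost)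
  also have "\<dots> = (\<Sum>i<N. \<Sum>j<N. lam i * lam j * (\<Sum>k<n i. \<Sum>l<n j. P i j k l * (norm (x i k - x j l))\<^sup>2))
      - (\<Sum>i<N. lam i * (\<Sum>k<n i. w i k * (norm (m i k - x i k))\<^sup>2))"
    by (simp add: sum_subtractf right_diff_distrib sum_distrib_left mult_ac sum.swap[of _ "{..<n _}" "{..<N}"])
  finally show "Psi2 N lam n w x \<nu> \<le> \<dots>" .
qed

end

lemma ratio_le_two_minus:
  fixes a b s d :: real
  assumes "0 \<le> a" "a \<le> 2 * s - d" "0 \<le> d" "s \<le> b"
  shows "a / b \<le> 2 - d / s"
proof (cases "s = 0")
  case True
  then have "a = 0" using assms by linarith
  then show ?thesis using True by simp
next
  case False
  then have "0 < s" using assms by linarith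
  have "a / b \<le> (2 * s - d) / b" using assms \<open>0 < s\<close> by (simp add: divide_right_mono)
  also have "\<dots> \<le> (2 * s - d) / s" using assms \<open>0 < s\<close> by (intro divide_left_mono) auto
  also have "\<dots> = 2 - d / s" using \<open>0 < s\<close> by (simp add: field_simps)
  finally show ?thesis .
qed

lemma pairwise_plans_of_upper_plans:
  assumes lam_pos: "\<forall>i<N. 0 < lam i \<and> lam i < 1" and lam_sum: "(\<Sum>i<N. lam i) = 1"
    and w_pos: "\<forall>i<N. \<forall>k<n i. 0 < w i k"
    and P_diag: "\<forall>i<N. \<forall>k<n i. \<forall>l<n i. P i i k l = (if l = k then w i k else 0)"
    and P_coup: "\<forall>i<N. \<forall>j<N. i < j \<longrightarrow>
          (\<forall>k<n i. \<forall>l<n j. P i j k l \<ge> 0)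
        \<and> (\<forall>k<n i. (\<Sum>l<n j. P i j k l) = w i k)
        \<and> (\<forall>l<n j. (\<Sum>k<n i. P i j k l) = w j l)"
    and P_sym: "\<forall>i<N. \<forall>j<N. j < i \<longrightarrow> (\<forall>k<n i. \<forall>l<n j. P i j k l = P j i l k)"
    and m_def: "\<forall>i<N. \<forall>k<n i.
          m i k = (\<Sum>j<N. lam j *\<^sub>R (\<Sum>l<n j. (P i j k l / w i k) *\<^sub>R x j l))"
  shows "pairwise_plans N lam n w x P m"
proof
  fix i j k l assume ij: "i < N" "j < N"
  show "0 \<le> P i j k l" if "k < n i" "l < n j"
    using ij that P_coup P_diag P_sym w_pos by (cases i j rule: linorder_cases) (auto simp: less_imp_le)
  show "(\<Sum>l<n j. P i j k l) = w i k" if "k < n i"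
  proof (cases i j rule: linorder_cases)
    case equal
    then have "(\<Sum>l<n j. P i j k l) = (\<Sum>l<n i. if l = k then w i k else 0)"
      using ij that P_diag by (intro sum.cong) auto
    then show ?thesis using that by simp
  next
    case greater
    then have "(\<Sum>l<n j. P i j k l) = (\<Sum>l<n j. P j i l k)"
      using ij that P_sym by (intro sum.cong) auto
    then show ?thesis using greater ij that P_coup by auto
  qed (use ij that P_coup in auto)
  show "(\<Sum>k<n i. P i j k l) = w j l" if "l < n j"
  proof (cases i j rule: linorder_cases)
    case equal
    then have "(\<Sum>k<n i. P i j k l) = (\<Sum>k<n i. if l = k then w i k else 0)"
      using ij that P_diag by (intro sum.cong) auto
    then show ?thesis using equal that by simp
  next
    case greater
    then have "(\<Sum>k<n i. P i j k l) = (\<Sum>k<n i. P j i l k)"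
      using ij that P_sym by (intro sum.cong) auto
    then show ?thesis using greater ij that P_coup by auto
  qed (use ij that P_coup in auto)
qed (use lam_pos lam_sum w_pos m_def in auto)


lemma sum_plan_costs_eq_twice_upper:
  fixes x :: "nat \<Rightarrow> nat \<Rightarrow> 'a::real_normed_vector"
  assumes P_diag: "\<forall>i<N. \<forall>k<n i. \<forall>l<n i. P i i k l = (if l = k then w i k else 0)"
    and P_opt: "\<forall>i<N. \<forall>j<N. i < j \<longrightarrow>
          (\<Sum>k<n i. \<Sum>l<n j. P i j k l * (norm (x i k - x j l))\<^sup>2)
            = W2sq (dmeas (n i) (w i) (x i)) (dmeas (n j) (w j) (x j))"
    and P_sym: "\<forall>i<N. \<forall>j<N. j < i \<longrightarrow> (\<forall>k<n i. \<forall>l<n j. P i j k l = P j i l k)"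
  shows "(\<Sum>i<N. \<Sum>j<N. lam i * lam j * (\<Sum>k<n i. \<Sum>l<n j. P i j k l * (norm (x i k - x j l))\<^sup>2))
    = 2 * (\<Sum>i<N. \<Sum>j<N. if i < j then lam i * lam j *
        W2sq (dmeas (n i) (w i) (x i)) (dmeas (n j) (w j) (x j)) else 0)"
proof -
  define C where "C i j = (\<Sum>k<n i. \<Sum>l<n j. P i j k l * (norm (x i k - x j l))\<^sup>2)" for i j
  have C_diag: "C i i = 0" if "i < N" for i
    unfolding C_def using P_diag that by (auto intro!: sum.neutral)
  have C_sym_lower: "C i j = C j i" if "j < i" "i < N" for i j
  proof -
    have "C i j = (\<Sum>k<n i. \<Sum>l<n j. P j i l k * (norm (x j l - x i k))\<^sup>2)"
      unfolding C_def using P_sym that by (intro sum.cong refl) (auto simp: norm_minus_commute)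
    also have "\<dots> = C j i" unfolding C_def by (rule sum.swap)
    finally show ?thesis .
  qed
  then have "C i j = C j i" if "i < N" "j < N" for i j
    using that by (cases i j rule: linorder_cases) auto
  then have "(\<Sum>i<N. \<Sum>j<N. lam i * lam j * C i j)
      = 2 * (\<Sum>i<N. \<Sum>j<N. if i < j then lam i * lam j * C i j else 0) + (\<Sum>i<N. lam i * lam i * C i i)"
    by (subst sum_upper_triangle) (simp_all add: mult_ac)
  also have "(\<Sum>i<N. lam i * lam i * C i i) = 0"
    using C_diag by simp
  also have "(\<Sum>i<N. \<Sum>j<N. if i < j then lam i * lam j * C i j else 0)
      = (\<Sum>i<N. \<Sum>j<N. if i < j then lam i * lam j * W2sq (dmeas (n i) (w i) (x i)) (dmeas (n j) (w j) (x j)) else 0)"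
    unfolding C_def using P_opt by (intro sum.cong refl) auto
  finally show ?thesis unfolding C_def by simp
qed

theorem mainTheorem7:
  fixes N :: nat and lam :: "nat \<Rightarrow> real" and n :: "nat \<Rightarrow> nat"
    and w :: "nat \<Rightarrow> nat \<Rightarrow> real" and x :: "nat \<Rightarrow> nat \<Rightarrow> 'a::euclidean_space"
    and P :: "nat \<Rightarrow> nat \<Rightarrow> nat \<Rightarrow> nat \<Rightarrow> real"
    and m :: "nat \<Rightarrow> nat \<Rightarrow> 'a" and \<nu>t \<nu>h :: "'a \<Rightarrow> real"
  assumes N2: "N \<ge> 2"
    and lam_pos: "\<forall>i<N. 0 < lam i \<and> lam i < 1" and lam_sum: "(\<Sum>i<N. lam i) = 1"
    and w_pos: "\<forall>i<N. \<forall>k<n i. 0 < w i k" and w_sum: "\<forall>i<N. (\<Sum>k<n i. w i k) = 1"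
    and x_dist: "\<forall>i<N. inj_on (x i) {..<n i}"
    and not_all_eq: "\<exists>i<N. \<exists>j<N. dmeas (n i) (w i) (x i) \<noteq> dmeas (n j) (w j) (x j)"
    and P_diag: "\<forall>i<N. \<forall>k<n i. \<forall>l<n i. P i i k l = (if l = k then w i k else 0)"
    and P_coup: "\<forall>i<N. \<forall>j<N. i < j \<longrightarrow>
          (\<forall>k<n i. \<forall>l<n j. P i j k l \<ge> 0)
        \<and> (\<forall>k<n i. (\<Sum>l<n j. P i j k l) = w i k)
        \<and> (\<forall>l<n j. (\<Sum>k<n i. P i j k l) = w j l)"
    and P_opt: "\<forall>i<N. \<forall>j<N. i < j \<longrightarrow>
          (\<Sum>k<n i. \<Sum>l<n j. P i j k l * (norm (x i k - x j l))\<^sup>2)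
            = W2sq (dmeas (n i) (w i) (x i)) (dmeas (n j) (w j) (x j))"
    and P_sym: "\<forall>i<N. \<forall>j<N. j < i \<longrightarrow> (\<forall>k<n i. \<forall>l<n j. P i j k l = P j i l k)"
    and m_def: "\<forall>i<N. \<forall>k<n i.
          m i k = (\<Sum>j<N. lam j *\<^sub>R (\<Sum>l<n j. (P i j k l / w i k) *\<^sub>R x j l))"
    and nut_def: "\<nu>t = (\<lambda>y. \<Sum>i<N. lam i * (\<Sum>k<n i. if m i k = y then w i k else 0))"
    and nuh_prob: "fsprob \<nu>h"
    and nuh_opt: "\<forall>\<nu>. fsprob \<nu> \<longrightarrow> Psi2 N lam n w x \<nu>h \<le> Psi2 N lam n w x \<nu>"
  shows "Psi2 N lam n w x \<nu>t / Psi2 N lam n w x \<nu>h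
    \<le> 2 - (\<Sum>i<N. lam i * (\<Sum>k<n i. w i k * (norm (m i k - x i k))\<^sup>2))
          / (\<Sum>i<N. \<Sum>j<N. if i < j then lam i * lam j *
               W2sq (dmeas (n i) (w i) (x i)) (dmeas (n j) (w j) (x j)) else 0)"
proof (rule ratio_le_two_minus)
  (* The lower bound holds for every probability measure. *)
  interpret pairwise_plans N lam n w x P m
    using lam_pos lam_sum w_pos P_diag P_coup P_sym m_def by (rule pairwise_plans_of_upper_plans)
  show "0 \<le> Psi2 N lam n w x \<nu>t"
    unfolding nut_def by (rule Psi2_output_le(2))
  show "Psi2 N lam n w x \<nu>t \<le> 2 * (\<Sum>i<N. \<Sum>j<N. if i < j then lam i * lam j *
      W2sq (dmeas (n i) (w i) (x i)) (dmeas (n j) (w j) (x j)) else 0)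
      - (\<Sum>i<N. lam i * (\<Sum>k<n i. w i k * (norm (m i k - x i k))\<^sup>2))"
    using Psi2_output_le(1) sum_plan_costs_eq_twice_upper[OF P_diag P_opt P_sym]
    unfolding nut_def by simp
  show "0 \<le> (\<Sum>i<N. lam i * (\<Sum>k<n i. w i k * (norm (m i k - x i k))\<^sup>2))"
    using lam_nonneg w_pos by (intro sum_nonneg mult_nonneg_nonneg) (auto intro: less_imp_le)
  show "(\<Sum>i<N. \<Sum>j<N. if i < j then lam i * lam j *
      W2sq (dmeas (n i) (w i) (x i)) (dmeas (n j) (w j) (x j)) else 0) \<le> Psi2 N lam n w x \<nu>h"
    using lam_nonneg lam_sum w_pos w_sum nuh_prob
    by (intro sum_pairs_W2sq_le_Psi2) (auto intro: less_imp_le)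
qed

end
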